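(* The LP randomized mechanism has approximation ratio at most $n$ for (integrally) scheduling any number of tasks to $n$ machines without money.
   Context: Scheduling without payments: $n$ machines, $m$ (indivisible) tasks; machine $i$ has private true times $t_{i,j}\ge0$ and declares $\hat t_{i,j}\ge0$. A randomized mechanism outputs a random integral allocation $A$ ($A_{i,j}\in\{0,1\}$, each task to exactly one machine) with marginals $a_{i,j}(\hat{\mathbf t})=\Pr[A_{i,j}=1]$. Machines are bound by their declarations: machine $i$ executes an assigned task $j$ for time $\max\{\hat t_{i,j},t_{i,j}\}$; her cost is $C_i(\hat{\mathbf t})=\sum_j a_{i,j}\max\{\hat t_{i,j},t_{i,j}\}$ and the makespan is $\mathbb E[\max_i\sum_jA_{i,j}\max\{\hat t_{i,j},t_{i,j}\}]$. A mechanism is truthful if for every $\mathbf t$, $i$, $\hat{\mathbf t}$: $C_i(\mathbf t_i,\hat{\mathbf t}_{-i})\le C_i(\hat{\mathbf t})$. Its approximation ratio is the supremum over instances $\mathbf t$ of the makespan under truthful reports divided by the optimal integral makespan $\min_A\max_i\sum_jA_{i,j}t_{i,j}$. The LP randomized mechanism, on declarations $\hat{\mathbf t}$, computes an optimal solution $\alpha(\hat{\mathbf t})$ (selected by a fixed rule among optimal solutions) of the linear program: minimize $\mu$ subject to $\sum_i\alpha_{i,j}=1$ for all $j$, $\mu-\sum_j\alpha_{i,j}\hat t_{i,j}\ge0$ for all $i$, $\alpha_{i,j}\ge0$; and assigns each task $j$ to machine $i$ with probability $\alpha_{i,j}(\hat{\mathbf t})$ (i.e.\ $a_{i,j}=\alpha_{i,j}$).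 *)

theory Defs
  imports "HOL-Probability.Probability" "HOL-Library.FuncSet"
begin

text \<open>Machines are indexed by i < n, tasks by j < m. A time matrix is a
function t :: nat => nat => real (entry t i j = time of machine i on task j).
An integral allocation is a map s from tasks {..<m} to machines {..<n}
(extensional outside {..<m}); A i j = 1 iff s j = i.\<close>

definition allocations :: "nat \<Rightarrow> nat \<Rightarrow> (nat \<Rightarrow> nat) set" where
  "allocations n m = ({..<m} \<rightarrow>\<^sub>E {..<n})"

text \<open>Makespan of allocation s when machines declared that and have true
times t: machine i executes task j for time max (that i j) (t i j).\<close>
definition exec_makespan ::
  "nat \<Rightarrow> nat \<Rightarrow> (nat \<Rightarrow> nat \<Rightarrow> real) \<Rightarrow> (nat \<Rightarrow> nat \<Rightarrow> real) \<Rightarrow> (nat \<Rightarrow> nat) \<Rightarrow> real" where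
  "exec_makespan n m that t s =
     Max ((\<lambda>i. \<Sum>j\<in>{j. j < m \<and> s j = i}. max (that i j) (t i j)) ` {..<n})"

definition makespan :: "nat \<Rightarrow> nat \<Rightarrow> (nat \<Rightarrow> nat \<Rightarrow> real) \<Rightarrow> (nat \<Rightarrow> nat) \<Rightarrow> real" where
  "makespan n m t s = Max ((\<lambda>i. \<Sum>j\<in>{j. j < m \<and> s j = i}. t i j) ` {..<n})"

definition opt_makespan :: "nat \<Rightarrow> nat \<Rightarrow> (nat \<Rightarrow> nat \<Rightarrow> real) \<Rightarrow> real" where
  "opt_makespan n m t = Min (makespan n m t ` allocations n m)"

definition lp_feasible ::
  "nat \<Rightarrow> nat \<Rightarrow> (nat \<Rightarrow> nat \<Rightarrow> real) \<Rightarrow> (nat \<Rightarrow> nat \<Rightarrow> real) \<Rightarrow> real \<Rightarrow> bool" where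
  "lp_feasible n m t alpha mu \<longleftrightarrow>
     (\<forall>j<m. (\<Sum>i<n. alpha i j) = 1) \<and>
     (\<forall>i<n. mu - (\<Sum>j<m. alpha i j * t i j) \<ge> 0) \<and>
     (\<forall>i<n. \<forall>j<m. alpha i j \<ge> 0)"

definition lp_optimal ::
  "nat \<Rightarrow> nat \<Rightarrow> (nat \<Rightarrow> nat \<Rightarrow> real) \<Rightarrow> (nat \<Rightarrow> nat \<Rightarrow> real) \<Rightarrow> real \<Rightarrow> bool" where
  "lp_optimal n m t alpha mu \<longleftrightarrow>
     lp_feasible n m t alpha mu \<and>
     (\<forall>alpha' mu'. lp_feasible n m t alpha' mu' \<longrightarrow> mu \<le> mu')"

definition lp_randomized_mechanism ::
  "nat \<Rightarrow> nat \<Rightarrow> ((nat \<Rightarrow> nat \<Rightarrow> real) \<Rightarrow> (nat \<Rightarrow> nat \<Rightarrow> real))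
   \<Rightarrow> ((nat \<Rightarrow> nat \<Rightarrow> real) \<Rightarrow> (nat \<Rightarrow> nat) pmf) \<Rightarrow> bool" where
  "lp_randomized_mechanism n m sel D \<longleftrightarrow>
     (\<forall>that. (\<forall>i<n. \<forall>j<m. that i j \<ge> 0) \<longrightarrow>
        (\<exists>mu. lp_optimal n m that (sel that) mu) \<and>
        set_pmf (D that) \<subseteq> allocations n m \<and>
        (\<forall>i<n. \<forall>j<m. measure_pmf.prob (D that) {s. s j = i} = sel that i j))"

end

theory Submission
  imports Defs
begin

text \<open>Under truthful reports the makespan of an allocation is at most the total load of all
  machines. By linearity of expectation the expected total load depends only on the marginals
  \<open>\<alpha>\<close>, and it is the LP objective summed over the machines, \<open>\<Sum>\<^sub>i \<Sum>\<^sub>j \<alpha>\<^sub>i\<^sub>j t\<^sub>i\<^sub>j \<le> n \<mu>\<close>.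
  Every integral allocation is a feasible LP solution with its makespan as \<open>\<mu>\<close>, so the LP
  optimum is at most the optimal integral makespan.\<close>

lemma Max_image_le_sum:
  fixes f :: "'a \<Rightarrow> 'b::linordered_semidom"
  assumes "finite I" "I \<noteq> {}" "\<And>i. i \<in> I \<Longrightarrow> 0 \<le> f i"
  shows "Max (f ` I) \<le> sum f I"
  using assms by (auto intro!: member_le_sum)

lemma sum_filter_eq_sum_of_bool:
  fixes f :: "nat \<Rightarrow> 'a::comm_semiring_1"
  shows "(\<Sum>j\<in>{j. j < m \<and> P j}. f j) = (\<Sum>j<m. of_bool (P j) * f j)"
  by (simp add: Collect_conj_eq lessThan_def)

lemma exec_makespan_truthful: "exec_makespan n m t t = makespan n m t"
  by (simp add: exec_makespan_def makespan_def fun_eq_iff)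

definition total_load :: "nat \<Rightarrow> nat \<Rightarrow> (nat \<Rightarrow> nat \<Rightarrow> real) \<Rightarrow> (nat \<Rightarrow> nat) \<Rightarrow> real" where
  "total_load n m t s = (\<Sum>i<n. \<Sum>j\<in>{j. j < m \<and> s j = i}. t i j)"

lemma makespan_le_total_load:
  assumes "n \<ge> 1" "\<forall>i<n. \<forall>j<m. t i j \<ge> 0"
  shows "makespan n m t s \<le> total_load n m t s"
  unfolding makespan_def total_load_def using assms
  by (intro Max_image_le_sum) (auto intro: sum_nonneg simp: lessThan_empty_iff)

lemma total_load_nonneg:
  assumes "\<forall>i<n. \<forall>j<m. t i j \<ge> 0"
  shows "total_load n m t s \<ge> 0"
  unfolding total_load_def using assms by (auto intro!: sum_nonneg)

lemma total_load_eq_sum_indicator: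
  "total_load n m t = (\<lambda>s. \<Sum>i<n. \<Sum>j<m. indicator {s. s j = i} s * t i j)"
  by (simp add: fun_eq_iff total_load_def sum_filter_eq_sum_of_bool indicator_def)

lemma integrable_indicator_load:
  "integrable (measure_pmf p) (\<lambda>s. indicator {s. s j = i} s * c :: real)"
  by (intro integrable_mult_left) (simp add: less_top[symmetric])

lemma integrable_total_load: "integrable (measure_pmf p) (total_load n m t)"
  unfolding total_load_eq_sum_indicator
  by (simp only: Bochner_Integration.integrable_sum integrable_indicator_load)

lemma expectation_total_load:
  "measure_pmf.expectation p (total_load n m t)
     = (\<Sum>i<n. \<Sum>j<m. measure_pmf.prob p {s. s j = i} * t i j)"
  unfolding total_load_eq_sum_indicator
  by (simp only: Bochner_Integration.integral_sum Bochner_Integration.integrable_sum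
      integrable_indicator_load) simp

lemma lp_feasible_objective_le:
  assumes "lp_feasible n m t \<alpha> \<mu>"
  shows "(\<Sum>i<n. \<Sum>j<m. \<alpha> i j * t i j) \<le> real n * \<mu>"
proof -
  have "(\<Sum>i<n. \<Sum>j<m. \<alpha> i j * t i j) \<le> (\<Sum>i<n. \<mu>)"
    using assms unfolding lp_feasible_def by (intro sum_mono) auto
  then show ?thesis by simp
qed

lemma lp_feasible_allocation:
  assumes "s \<in> allocations n m"
  shows "lp_feasible n m t (\<lambda>i j. of_bool (s j = i)) (makespan n m t s)"
  unfolding lp_feasible_def
proof (intro conjI allI impI)
  fix j assume "j < m"
  then have "s j < n" using assms by (auto simp: allocations_def)
  then show "(\<Sum>i<n. of_bool (s j = i)) = (1::real)"
    by (simp add: of_bool_def sum.delta)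
next
  fix i assume "i < n"
  then have "(\<Sum>j\<in>{j. j < m \<and> s j = i}. t i j) \<le> makespan n m t s"
    unfolding makespan_def by (intro Max_ge) auto
  then show "0 \<le> makespan n m t s - (\<Sum>j<m. of_bool (s j = i) * t i j)"
    by (simp add: sum_filter_eq_sum_of_bool)
qed simp

lemma lp_optimal_le_opt_makespan:
  assumes "n \<ge> 1" "lp_optimal n m t \<alpha> \<mu>"
  shows "\<mu> \<le> opt_makespan n m t"
proof -
  have "finite (allocations n m)"
    by (simp add: allocations_def finite_PiE)
  moreover have "allocations n m \<noteq> {}"
    using assms(1) by (auto simp: allocations_def PiE_eq_empty_iff lessThan_empty_iff)
  ultimately have "opt_makespan n m t \<in> makespan n m t ` allocations n m"
    unfolding opt_makespan_def by (intro Min_in) auto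
  then obtain s where s: "s \<in> allocations n m" "opt_makespan n m t = makespan n m t s"
    by auto
  then show ?thesis
    using assms(2) lp_feasible_allocation[OF s(1)] unfolding lp_optimal_def by auto
qed

theorem theorem6:
  fixes n m :: nat
    and sel :: "(nat \<Rightarrow> nat \<Rightarrow> real) \<Rightarrow> (nat \<Rightarrow> nat \<Rightarrow> real)"
    and D :: "(nat \<Rightarrow> nat \<Rightarrow> real) \<Rightarrow> (nat \<Rightarrow> nat) pmf"
    and t :: "nat \<Rightarrow> nat \<Rightarrow> real"
  assumes "n \<ge> 1"
    and "lp_randomized_mechanism n m sel D"
    and "\<forall>i<n. \<forall>j<m. t i j \<ge> 0"
  shows "measure_pmf.expectation (D t) (exec_makespan n m t t)
           \<le> real n * opt_makespan n m t"
proof -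
  obtain \<mu> where opt: "lp_optimal n m t (sel t) \<mu>"
    and prob: "\<forall>i<n. \<forall>j<m. measure_pmf.prob (D t) {s. s j = i} = sel t i j"
    using assms(2,3) unfolding lp_randomized_mechanism_def by meson
  have "measure_pmf.expectation (D t) (exec_makespan n m t t)
          \<le> measure_pmf.expectation (D t) (total_load n m t)"
    unfolding exec_makespan_truthful using assms(1,3)
    by (intro integral_mono_AE' integrable_total_load AE_pmfI makespan_le_total_load
        total_load_nonneg)
  also have "\<dots> = (\<Sum>i<n. \<Sum>j<m. sel t i j * t i j)"
    unfolding expectation_total_load using prob by (intro sum.cong refl) simp
  also have "\<dots> \<le> real n * \<mu>"
    using opt by (intro lp_feasible_objective_le) (simp add: lp_optimal_def)
  also have "\<dots> \<le> real n * opt_makespan n m t"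
    using lp_optimal_le_opt_makespan[OF assms(1) opt] by (simp add: mult_left_mono)
  finally show ?thesis .
qed

end
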